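(* Let $1\le p\le q$, $n=p+q$, and let $\mu=(a_1,\dots,a_p\mid b_1,\dots,b_q)\in\mathbb{Z}^n$ be $\Delta^+(\mathfrak{k},\mathfrak{t})$-dominant with $\mu-\beta$ also $\Delta^+(\mathfrak{k},\mathfrak{t})$-dominant. If $a_1\ge q+1$ and $b_1\ge p+1$, then $\{\mu-\tau\}\gg\{\mu-\tau-\beta\}$ for every $\tau\in\Omega_{p,q}$, and consequently $\|\mu\|_{\mathrm{spin}}>\|\mu-\beta\|_{\mathrm{spin}}$.
   Context: Weights are vectors in $\mathbb{R}^n$ written $(x_1,\dots,x_p\mid y_1,\dots,y_q)$, Euclidean norm $\|\cdot\|$. $\rho_c=(p,\dots,1\mid q,\dots,1)$, $\beta=(1,0,\dots,0\mid1,0,\dots,0)$. $\Delta^+(\mathfrak{k},\mathfrak{t})$-dominant means $x_1\ge\cdots\ge x_p\ge0$, $y_1\ge\cdots\ge y_q\ge0$. For $\nu\in\mathbb{Z}^n$, $\{\nu\}$ is obtained by taking absolute values of all coordinates and sorting the first $p$ and last $q$ coordinates separately in decreasing order; $\|\nu\|_{\mathfrak{k}}=\|\{\nu\}+\rho_c\|$. $u\gg v$ means $u_i\ge v_i$ for all $i$ with strict inequality for some $i$. $\Omega_{p,q}$ is the set of $(x\mid y)\in\mathbb{Z}^n$ with $q\ge x_1\ge\cdots\ge x_p\ge0$ and $y_j=\#\{i\mid q-x_i\ge j\}$ ($1\le j\le q$). $\|\nu\|_{\mathrm{spin}}=\min_{\tau\in\Omega_{p,q}}\|\nu-\tau\|_{\mathfrak{k}}$.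 *)

theory Defs
  imports Complex_Main
begin

text \<open>A weight (x_1,...,x_p | y_1,...,y_q) in Z^n, n = p+q, is a pair of integer lists
  of lengths p and q.\<close>
type_synonym weight = "int list \<times> int list"

definition wminus :: "weight \<Rightarrow> weight \<Rightarrow> weight" where
  "wminus u v = (map2 (-) (fst u) (fst v), map2 (-) (snd u) (snd v))"

definition wplus :: "weight \<Rightarrow> weight \<Rightarrow> weight" where
  "wplus u v = (map2 (+) (fst u) (fst v), map2 (+) (snd u) (snd v))"

definition wnorm :: "weight \<Rightarrow> real" where
  "wnorm u = sqrt (\<Sum>z\<leftarrow>fst u @ snd u. (real_of_int z)^2)"

definition rho_c :: "nat \<Rightarrow> nat \<Rightarrow> weight" where
  "rho_c p q = (map int (rev [1..<p+1]), map int (rev [1..<q+1]))"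

definition beta :: "nat \<Rightarrow> nat \<Rightarrow> weight" where
  "beta p q = (1 # replicate (p - 1) 0, 1 # replicate (q - 1) 0)"

definition nonincr_nonneg :: "int list \<Rightarrow> bool" where
  "nonincr_nonneg xs \<longleftrightarrow> (\<forall>i. i + 1 < length xs \<longrightarrow> xs ! i \<ge> xs ! (i + 1)) \<and> (\<forall>i < length xs. xs ! i \<ge> 0)"

definition k_dominant :: "weight \<Rightarrow> bool" where
  "k_dominant u \<longleftrightarrow> nonincr_nonneg (fst u) \<and> nonincr_nonneg (snd u)"

definition braces :: "weight \<Rightarrow> weight" where
  "braces u = (rev (sort (map abs (fst u))), rev (sort (map abs (snd u))))"

definition k_norm :: "weight \<Rightarrow> real" where
  "k_norm u = wnorm (wplus (braces u) (rho_c (length (fst u)) (length (snd u))))"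

definition gg :: "weight \<Rightarrow> weight \<Rightarrow> bool" where
  "gg u v \<longleftrightarrow> (let a = fst u @ snd u; b = fst v @ snd v in
      length a = length b \<and> (\<forall>i < length a. a ! i \<ge> b ! i) \<and> (\<exists>i < length a. a ! i > b ! i))"

definition Omega :: "nat \<Rightarrow> nat \<Rightarrow> weight set" where
  "Omega p q = {(x, y). length x = p \<and> length y = q \<and>
      (\<forall>i < p. 0 \<le> x ! i \<and> x ! i \<le> int q) \<and>
      (\<forall>i. i + 1 < p \<longrightarrow> x ! i \<ge> x ! (i + 1)) \<and>
      (\<forall>j < q. y ! j = int (card {i. i < p \<and> int q - x ! i \<ge> int (j + 1)}))}"

definition spin_norm :: "nat \<Rightarrow> nat \<Rightarrow> weight \<Rightarrow> real" where
  "spin_norm p q \<nu> = Min ((\<lambda>\<tau>. k_norm (wminus \<nu> \<tau>)) ` Omega p q)"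

end

theory Submission
  imports Defs "HOL-Library.Multiset"
begin

text \<open>For \<tau> = (x | y) in Omega(p,q) the leading entries of the two blocks of \<mu> - \<tau>
  are a_1 - x_1 \<ge> 1 and b_1 - y_1 \<ge> 1, because x_1 \<le> q and y_1 \<le> p. Subtracting \<beta>
  lowers exactly these two entries by one, hence lowers their absolute values and leaves
  all others unchanged. Sorting is monotone for the componentwise order, and the multiset
  of absolute values really changes, so {\<mu> - \<tau>} \<gg> {\<mu> - \<tau> - \<beta>}. Adding \<rho>_c keeps all
  entries nonnegative, so the k-norm drops strictly for every \<tau>, and hence so does its
  minimum over the finite nonempty set Omega(p,q).\<close>

lemma sorted_nth_le_iff_length_filter:
  fixes zs :: "'a::linorder list"
  assumes "sorted zs" and "k < length zs"
  shows "zs ! k \<le> c \<longleftrightarrow> k < length (filter (\<lambda>z. z \<le> c) zs)"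
proof
  assume "zs ! k \<le> c"
  moreover have "zs ! i \<le> zs ! k" if "i < Suc k" for i
    using that assms by (simp add: sorted_nth_mono)
  ultimately have "\<forall>z\<in>set (take (Suc k) zs). z \<le> c"
    using assms(2) by (fastforce simp: in_set_conv_nth)
  then have "length (filter (\<lambda>z. z \<le> c) (take (Suc k) zs)) = Suc k"
    using assms(2) by simp
  moreover have "filter (\<lambda>z. z \<le> c) zs
      = filter (\<lambda>z. z \<le> c) (take (Suc k) zs) @ filter (\<lambda>z. z \<le> c) (drop (Suc k) zs)"
    by (metis append_take_drop_id filter_append)
  ultimately show "k < length (filter (\<lambda>z. z \<le> c) zs)" by simp
next
  assume k_less: "k < length (filter (\<lambda>z. z \<le> c) zs)"
  show "zs ! k \<le> c"
  proof (rule ccontr)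
    assume "\<not> zs ! k \<le> c"
    moreover have "zs ! k \<le> zs ! j" if "k \<le> j" and "j < length zs" for j
      using that assms(1) by (simp add: sorted_nth_mono)
    ultimately have "\<not> zs ! j \<le> c" if "k \<le> j" and "j < length zs" for j
      using that by (meson order.trans)
    then have "\<forall>z\<in>set (drop k zs). \<not> z \<le> c"
      by (auto simp: in_set_conv_nth)
    then have "filter (\<lambda>z. z \<le> c) zs = filter (\<lambda>z. z \<le> c) (take k zs)"
      by (metis append_take_drop_id append.right_neutral filter_append filter_False)
    with k_less show False
      by (metis length_filter_le length_take min.bounded_iff not_le)
  qed
qed

lemma list_all2_le_sort:
  fixes xs ys :: "'a::linorder list"
  assumes "list_all2 (\<le>) xs ys"
  shows "list_all2 (\<le>) (sort xs) (sort ys)"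
proof -
  have len: "length ys = length xs"
    using assms by (simp add: list_all2_lengthD)
  have count_mono: "length (filter (\<lambda>z. z \<le> c) ys) \<le> length (filter (\<lambda>z. z \<le> c) xs)" for c
    using assms by (induction rule: list_all2_induct) auto
  have "sort xs ! k \<le> sort ys ! k" if "k < length xs" for k
  proof -
    let ?c = "sort ys ! k"
    have "k < length (filter (\<lambda>z. z \<le> ?c) (sort ys))"
      using sorted_nth_le_iff_length_filter[of "sort ys" k ?c] that len by simp
    also have "\<dots> \<le> length (filter (\<lambda>z. z \<le> ?c) (sort xs))"
      using count_mono by (simp add: filter_sort)
    finally show ?thesis
      using sorted_nth_le_iff_length_filter[of "sort xs" k ?c] that by simp
  qed
  with len show ?thesis
    by (simp add: list_all2_conv_all_nth)
qed

lemma rev_sort_abs_decrement_head: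
  fixes x :: "'a::linordered_idom"
  assumes "1 \<le> x"
  shows "list_all2 (\<le>) (rev (sort (map abs ((x - 1) # xs)))) (rev (sort (map abs (x # xs))))"
    and "rev (sort (map abs ((x - 1) # xs))) \<noteq> rev (sort (map abs (x # xs)))"
proof -
  have "list_all2 (\<le>) (map abs ((x - 1) # xs)) (map abs (x # xs))"
    using assms by (simp add: list_all2_refl)
  then show "list_all2 (\<le>) (rev (sort (map abs ((x - 1) # xs)))) (rev (sort (map abs (x # xs))))"
    by (metis list_all2_le_sort list_all2_rev)
  show "rev (sort (map abs ((x - 1) # xs))) \<noteq> rev (sort (map abs (x # xs)))"
  proof
    assume "rev (sort (map abs ((x - 1) # xs))) = rev (sort (map abs (x # xs)))"
    then have "mset (map abs ((x - 1) # xs)) = mset (map abs (x # xs))"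
      by (metis mset_rev mset_sort)
    with assms show False by simp
  qed
qed

lemma gg_iff_list_all2:
  "gg u v \<longleftrightarrow> list_all2 (\<le>) (fst v @ snd v) (fst u @ snd u) \<and> fst v @ snd v \<noteq> fst u @ snd u"
  unfolding gg_def Let_def list_all2_conv_all_nth
  by (auto simp: list_eq_iff_nth_eq dest: order.not_eq_order_implies_strict)

lemma wplus_append_nth:
  assumes "length (fst w) = length (fst u)" and "length (snd w) = length (snd u)"
    and "i < length (fst u @ snd u)"
  shows "(fst (wplus u w) @ snd (wplus u w)) ! i = (fst u @ snd u) ! i + (fst w @ snd w) ! i"
  using assms by (auto simp: wplus_def nth_append)

lemma gg_wplus:
  assumes "gg u v"
    and "length (fst v) = length (fst u)" and "length (fst w) = length (fst u)"
    and "length (snd w) = length (snd u)"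
  shows "gg (wplus u w) (wplus v w)"
proof -
  let ?U = "fst u @ snd u" and ?V = "fst v @ snd v" and ?W = "fst w @ snd w"
  have len: "length ?V = length ?U"
    using assms(1) by (simp add: gg_def Let_def)
  have "length (fst (wplus x w) @ snd (wplus x w)) = length ?U"
    if "length (fst x) = length (fst u)" and "length (snd x) = length (snd u)" for x
    using that assms(3,4) by (simp add: wplus_def)
  moreover have "(fst (wplus u w) @ snd (wplus u w)) ! i = ?U ! i + ?W ! i"
    and "(fst (wplus v w) @ snd (wplus v w)) ! i = ?V ! i + ?W ! i" if "i < length ?U" for i
    using that len assms(2-4) by (simp_all add: wplus_append_nth)
  ultimately show ?thesis
    using assms(1,2) len unfolding gg_def Let_def by auto
qed

lemma wnorm_less:
  assumes "gg u v" and "\<forall>z\<in>set (fst v @ snd v). 0 \<le> z"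
  shows "wnorm v < wnorm u"
proof -
  let ?U = "fst u @ snd u" and ?V = "fst v @ snd v"
  from assms(1) have len: "length ?V = length ?U"
    and le: "\<forall>i<length ?U. ?V ! i \<le> ?U ! i" and less: "\<exists>i<length ?U. ?V ! i < ?U ! i"
    by (auto simp: gg_def Let_def)
  have nonneg: "\<forall>i<length ?U. 0 \<le> ?V ! i"
    using assms(2) len by (metis nth_mem)
  have sum_squares_nth:
    "(\<Sum>z\<leftarrow>zs. real_of_int z ^ 2) = (\<Sum>i<length zs. real_of_int (zs ! i) ^ 2)"
    for zs :: "int list"
    by (simp add: sum_list_sum_nth atLeast0LessThan)
  have "(\<Sum>i<length ?U. real_of_int (?V ! i) ^ 2) < (\<Sum>i<length ?U. real_of_int (?U ! i) ^ 2)"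
  proof (rule sum_strict_mono_ex1)
    show "\<forall>i\<in>{..<length ?U}. real_of_int (?V ! i) ^ 2 \<le> real_of_int (?U ! i) ^ 2"
      using le nonneg by (auto intro!: power_mono)
    show "\<exists>i\<in>{..<length ?U}. real_of_int (?V ! i) ^ 2 < real_of_int (?U ! i) ^ 2"
      using less nonneg by (auto intro!: power_strict_mono)
  qed simp
  then have "(\<Sum>z\<leftarrow>?V. real_of_int z ^ 2) < (\<Sum>z\<leftarrow>?U. real_of_int z ^ 2)"
    unfolding sum_squares_nth len .
  then show ?thesis
    unfolding wnorm_def by simp
qed

lemma rho_c_length: "length (fst (rho_c p q)) = p" "length (snd (rho_c p q)) = q"
  by (simp_all add: rho_c_def)

lemma wplus_nonneg:
  assumes "\<forall>z\<in>set (fst u @ snd u). 0 \<le> z" and "\<forall>z\<in>set (fst w @ snd w). 0 \<le> z"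
  shows "\<forall>z\<in>set (fst (wplus u w) @ snd (wplus u w)). 0 \<le> z"
  using assms by (auto simp: wplus_def set_zip intro!: add_nonneg_nonneg)

lemma k_norm_less_if_gg_braces:
  assumes "length (fst v) = length (fst u)" and "length (snd v) = length (snd u)"
    and "gg (braces u) (braces v)"
  shows "k_norm v < k_norm u"
proof -
  let ?\<rho> = "rho_c (length (fst u)) (length (snd u))"
  have "gg (wplus (braces u) ?\<rho>) (wplus (braces v) ?\<rho>)"
    using assms by (intro gg_wplus) (simp_all add: braces_def rho_c_length)
  moreover have "\<forall>z\<in>set (fst (wplus (braces v) ?\<rho>) @ snd (wplus (braces v) ?\<rho>)). 0 \<le> z"
    by (intro wplus_nonneg) (auto simp: braces_def rho_c_def)
  ultimately show ?thesis
    unfolding k_norm_def using assms(1,2) by (simp add: wnorm_less)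
qed

lemma map2_minus_replicate_zero: "map2 (-) xs (replicate (length xs) (0::'a::group_add)) = xs"
  by (induction xs) auto

lemma gg_braces_wminus_beta:
  fixes \<nu> :: weight
  assumes "length (fst \<nu>) = p" and "length (snd \<nu>) = q"
    and "1 \<le> fst \<nu> ! 0" and "1 \<le> snd \<nu> ! 0" and "0 < p" and "0 < q"
  shows "gg (braces \<nu>) (braces (wminus \<nu> (beta p q)))"
proof -
  obtain x xs y ys where \<nu>: "\<nu> = (x # xs, y # ys)"
    using assms(1,2,5,6) by (cases \<nu>; cases "fst \<nu>"; cases "snd \<nu>") auto
  with assms have x: "1 \<le> x" and y: "1 \<le> y" and pq: "p = Suc (length xs)" "q = Suc (length ys)"
    by auto
  have "wminus \<nu> (beta p q) = ((x - 1) # xs, (y - 1) # ys)"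
    by (simp add: \<nu> pq wminus_def beta_def map2_minus_replicate_zero)
  moreover
  let ?X = "rev (sort (map abs (x # xs)))" and ?X' = "rev (sort (map abs ((x - 1) # xs)))"
  let ?Y = "rev (sort (map abs (y # ys)))" and ?Y' = "rev (sort (map abs ((y - 1) # ys)))"
  have "list_all2 (\<le>) (?X' @ ?Y') (?X @ ?Y)"
    using rev_sort_abs_decrement_head(1)[OF x] rev_sort_abs_decrement_head(1)[OF y]
    by (rule list_all2_appendI)
  moreover have "?X' @ ?Y' \<noteq> ?X @ ?Y"
    using rev_sort_abs_decrement_head(2)[OF x, of xs] by simp
  ultimately show ?thesis
    by (simp add: gg_iff_list_all2 braces_def \<nu>)
qed

lemma k_norm_wminus_beta_less:
  fixes \<nu> :: weight
  assumes "length (fst \<nu>) = p" and "length (snd \<nu>) = q"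
    and "1 \<le> fst \<nu> ! 0" and "1 \<le> snd \<nu> ! 0" and "0 < p" and "0 < q"
  shows "k_norm (wminus \<nu> (beta p q)) < k_norm \<nu>"
proof (rule k_norm_less_if_gg_braces)
  show "length (fst (wminus \<nu> (beta p q))) = length (fst \<nu>)"
    and "length (snd (wminus \<nu> (beta p q))) = length (snd \<nu>)"
    using assms by (simp_all add: wminus_def beta_def)
  show "gg (braces \<nu>) (braces (wminus \<nu> (beta p q)))"
    using assms by (rule gg_braces_wminus_beta)
qed

lemma wminus_right_commute: "wminus (wminus u v) w = wminus (wminus u w) v"
  by (simp add: wminus_def list_eq_iff_nth_eq min.commute min.left_commute)

lemma Omega_finite: "finite (Omega p q)"
proof (rule finite_subset)
  show "Omega p q \<subseteq> {x. set x \<subseteq> {0..int q} \<and> length x = p} \<times> {y. set y \<subseteq> {0..int p} \<and> length y = q}"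
  proof
    fix \<tau> assume "\<tau> \<in> Omega p q"
    then obtain x y where \<tau>: "\<tau> = (x, y)" "length x = p" "length y = q"
      "\<forall>i<p. 0 \<le> x ! i \<and> x ! i \<le> int q"
      "\<forall>j<q. y ! j = int (card {i. i < p \<and> int q - x ! i \<ge> int (j + 1)})"
      unfolding Omega_def by auto
    have "card {i. i < p \<and> int q - x ! i \<ge> int (j + 1)} \<le> card {..<p}" for j
      by (intro card_mono) auto
    with \<tau> show "\<tau> \<in> {x. set x \<subseteq> {0..int q} \<and> length x = p} \<times> {y. set y \<subseteq> {0..int p} \<and> length y = q}"
      by (auto simp: in_set_conv_nth)
  qed
  show "finite ({x. set x \<subseteq> {0..int q} \<and> length x = p} \<times> {y. set y \<subseteq> {0..int p} \<and> length y = q})"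
    by (intro finite_cartesian_product finite_lists_length_eq) auto
qed

lemma Omega_nonempty: "Omega p q \<noteq> {}"
proof -
  have "{i. i < p \<and> int q - replicate p 0 ! i \<ge> int (j + 1)} = {..<p}" if "j < q" for j
    using that by auto
  then have "(replicate p 0, replicate q (int p)) \<in> Omega p q"
    unfolding Omega_def by auto
  then show ?thesis by blast
qed

lemma Omega_head_le:
  assumes "(x, y) \<in> Omega p q" and "0 < p" and "0 < q"
  shows "x ! 0 \<le> int q" and "y ! 0 \<le> int p"
proof -
  show "x ! 0 \<le> int q"
    using assms by (simp add: Omega_def)
  have "card {i. i < p \<and> int q - x ! i \<ge> 1} \<le> card {..<p}"
    by (intro card_mono) auto
  then show "y ! 0 \<le> int p"
    using assms by (simp add: Omega_def)
qed

lemma Min_image_less: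
  assumes "finite S" and "S \<noteq> {}" and "\<And>t. t \<in> S \<Longrightarrow> g t < f t"
  shows "Min (g ` S) < Min (f ` S)"
proof -
  have "Min (f ` S) \<in> f ` S"
    using assms(1,2) by simp
  then obtain t where t: "t \<in> S" and "Min (f ` S) = f t"
    by blast
  moreover have "Min (g ` S) \<le> g t"
    using assms(1) t by simp
  ultimately show ?thesis
    using assms(3) by fastforce
qed

lemma wminus_Omega_heads:
  assumes "\<tau> \<in> Omega p q" and "0 < p" and "0 < q" and "length a = p" and "length b = q"
    and "int q + 1 \<le> a ! 0" and "int p + 1 \<le> b ! 0"
  shows "length (fst (wminus (a, b) \<tau>)) = p" and "length (snd (wminus (a, b) \<tau>)) = q"
    and "1 \<le> fst (wminus (a, b) \<tau>) ! 0" and "1 \<le> snd (wminus (a, b) \<tau>) ! 0"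
proof -
  obtain x y where \<tau>: "\<tau> = (x, y)" and "length x = p" and "length y = q"
    using assms(1) by (auto simp: Omega_def)
  moreover have "x ! 0 \<le> int q" and "y ! 0 \<le> int p"
    using Omega_head_le assms(1-3) unfolding \<tau> by auto
  ultimately show "length (fst (wminus (a, b) \<tau>)) = p" "length (snd (wminus (a, b) \<tau>)) = q"
    and "1 \<le> fst (wminus (a, b) \<tau>) ! 0" "1 \<le> snd (wminus (a, b) \<tau>) ! 0"
    using assms(2-7) by (auto simp: wminus_def)
qed

theorem mainTheorem10:
  fixes p q :: nat and a b :: "int list"
  assumes "1 \<le> p" and "p \<le> q"
    and "length a = p" and "length b = q"
    and "k_dominant (a, b)"
    and "k_dominant (wminus (a, b) (beta p q))"
    and "a ! 0 \<ge> int q + 1" and "b ! 0 \<ge> int p + 1"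
  shows "(\<forall>\<tau> \<in> Omega p q. gg (braces (wminus (a, b) \<tau>))
                               (braces (wminus (wminus (a, b) \<tau>) (beta p q))))
         \<and> spin_norm p q (a, b) > spin_norm p q (wminus (a, b) (beta p q))"
proof -
  have "0 < p" and "0 < q"
    using assms(1,2) by simp_all
  note heads = wminus_Omega_heads[OF _ this assms(3,4,7,8)]
  have gg_\<tau>: "gg (braces (wminus (a, b) \<tau>)) (braces (wminus (wminus (a, b) \<tau>) (beta p q)))"
    if "\<tau> \<in> Omega p q" for \<tau>
    using heads[OF that] \<open>0 < p\<close> \<open>0 < q\<close> by (rule gg_braces_wminus_beta)
  have "k_norm (wminus (wminus (a, b) (beta p q)) \<tau>) < k_norm (wminus (a, b) \<tau>)"
    if "\<tau> \<in> Omega p q" for \<tau>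
    using k_norm_wminus_beta_less[OF heads[OF that] \<open>0 < p\<close> \<open>0 < q\<close>]
    by (simp only: wminus_right_commute[of "(a, b)" "beta p q"])
  then have "spin_norm p q (wminus (a, b) (beta p q)) < spin_norm p q (a, b)"
    unfolding spin_norm_def by (intro Min_image_less Omega_finite Omega_nonempty)
  with gg_\<tau> show ?thesis
    by blast
qed

end
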